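(* For every integer $n>0$ there is a normal proof of $\varphi_n$ in Prawitz-style Natural Deduction for $\mathbf{M}_{\rightarrow}$ that has exactly $2^n$ assumption occurrences of the formula $\xi_n$, all of which are discharged by the last inference (an $\rightarrow$-Introduction) of the proof.
   Context: $\mathbf{M}_{\rightarrow}$ is purely implicational minimal propositional logic: formulas are built from propositional letters using only $\rightarrow$; there is no $\bot$. Its Natural Deduction system (Prawitz style) has only two rules: $\rightarrow$-Introduction (from a derivation of $\beta$, possibly using assumptions $\alpha$, infer $\alpha\rightarrow\beta$, discharging any number, possibly zero, of occurrences of the assumption $\alpha$) and $\rightarrow$-Elimination (from $\alpha$ and $\alpha\rightarrow\beta$ infer $\beta$; $\alpha\rightarrow\beta$ is the major premise). A proof is a derivation with no open assumptions. A derivation is normal if no formula occurrence is both the conclusion of an $\rightarrow$-Introduction and the major premise of an $\rightarrow$-Elimination. An assumption occurrence is a leaf of the derivation tree. For formulas $X,Y$ let $\chi[X,Y]=(((X\rightarrow Y)\rightarrow X)\rightarrow X)\rightarrow Y$. Let $C$ and $D_1,D_2,\dots$ be distinct propositional letters. Define $\xi_1=\chi[D_1,C]$, $\xi_{i+1}=\chi[D_{i+1},\xi_i]$ for $i\ge 1$, and $\varphi_i=\xi_i\rightarrow C$ for $i\ge 1$. *)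

theory Defs
  imports Main
begin

datatype form = Atom nat | Imp form form  (infixr "\<rightarrow>\<^sub>f" 25)

definition C :: form where "C = Atom 0"
definition D :: "nat \<Rightarrow> form" where "D i = Atom i"

definition chi :: "form \<Rightarrow> form \<Rightarrow> form" where
  "chi X Y = ((((X \<rightarrow>\<^sub>f Y) \<rightarrow>\<^sub>f X) \<rightarrow>\<^sub>f X) \<rightarrow>\<^sub>f Y)"

fun xi :: "nat \<Rightarrow> form" where
  "xi 0 = C"  (* unused junk value; the paper's xi starts at index 1 *)
| "xi (Suc 0) = chi (D 1) C"
| "xi (Suc (Suc i)) = chi (D (Suc (Suc i))) (xi (Suc i))"

definition phi :: "nat \<Rightarrow> form" where "phi i = (xi i \<rightarrow>\<^sub>f C)"

text \<open>Assumption occurrences carry a discharge label; an \<open>\<rightarrow>\<close>-introduction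
  \<open>ImpI A l d\<close> discharges exactly the assumption occurrences of \<open>A\<close> with
  label \<open>l\<close> that are open in \<open>d\<close> (possibly none: vacuous discharge).
  \<open>ImpE d1 d2\<close>: minor premise derivation d1, major premise derivation d2.\<close>
datatype deriv = Ass form nat | ImpI form nat deriv | ImpE deriv deriv

fun concl :: "deriv \<Rightarrow> form" where
  "concl (Ass A l) = A"
| "concl (ImpI A l d) = (A \<rightarrow>\<^sub>f concl d)"
| "concl (ImpE d1 d2) = (case concl d2 of Imp a b \<Rightarrow> b | Atom n \<Rightarrow> Atom n)"

fun wf :: "deriv \<Rightarrow> bool" where
  "wf (Ass A l) = True"
| "wf (ImpI A l d) = wf d"
| "wf (ImpE d1 d2) = (wf d1 \<and> wf d2 \<and> (\<exists>B. concl d2 = (concl d1 \<rightarrow>\<^sub>f B)))"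

fun leaves :: "deriv \<Rightarrow> (form \<times> nat) list" where
  "leaves (Ass A l) = [(A, l)]"
| "leaves (ImpI A l d) = leaves d"
| "leaves (ImpE d1 d2) = leaves d1 @ leaves d2"

fun open_ass :: "deriv \<Rightarrow> (form \<times> nat) list" where
  "open_ass (Ass A l) = [(A, l)]"
| "open_ass (ImpI A l d) = filter (\<lambda>x. x \<noteq> (A, l)) (open_ass d)"
| "open_ass (ImpE d1 d2) = open_ass d1 @ open_ass d2"

definition is_proof :: "deriv \<Rightarrow> bool" where
  "is_proof d \<longleftrightarrow> wf d \<and> open_ass d = []"

fun normal :: "deriv \<Rightarrow> bool" where
  "normal (Ass A l) = True"
| "normal (ImpI A l d) = normal d"
| "normal (ImpE d1 d2) = (normal d1 \<and> normal d2 \<and> (\<forall>A l d. d2 \<noteq> ImpI A l d))"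

end

theory Submission
  imports Defs
begin

(* Idea of the proof.  From an assumption of chi[X,Y] = (((X -> Y) -> X) -> X) -> Y one
   derives Y by a normal derivation that uses the given derivation d of chi[X,Y] TWICE:

        [X]^1                                   [(X -> Y) -> X]^1   [X -> Y]
     ------------ (vacuous)                     ---------------------------- ->E
     ((X->Y)->X)->X     d                                    X
     ------------------- ->E               ---------------------- ->I^1
             Y                             ((X -> Y) -> X) -> X          d
         --------- ->I^1                   --------------------------------- ->E
          X -> Y                                          Y

   Since xi_(k+1) = chi[D_(k+1), xi_k] (with xi_0 = C), iterating this step n times,
   starting from the single assumption xi_n, yields a normal derivation of C whose
   number of assumption occurrences of xi_n doubles at every step; a final ->I
   discharging them all proves phi_n = xi_n -> C. *)

definition peirce_step :: "form \<Rightarrow> form \<Rightarrow> deriv \<Rightarrow> deriv" where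
  "peirce_step X Y d =
     ImpE (ImpI ((X \<rightarrow>\<^sub>f Y) \<rightarrow>\<^sub>f X) 1
             (ImpE (ImpI X 1 (ImpE (ImpI ((X \<rightarrow>\<^sub>f Y) \<rightarrow>\<^sub>f X) 1 (Ass X 1)) d))
                   (Ass ((X \<rightarrow>\<^sub>f Y) \<rightarrow>\<^sub>f X) 1)))
          d"

definition occurrences :: "form \<Rightarrow> deriv \<Rightarrow> nat" where
  "occurrences F d = length (filter (\<lambda>(A, k). A = F) (leaves d))"

lemma peirce_step_wf:
  assumes "wf d" and "concl d = chi X Y"
  shows "wf (peirce_step X Y d) \<and> concl (peirce_step X Y d) = Y"
  using assms by (simp add: peirce_step_def chi_def)

text \<open>The step is normal: its major premises are \<open>d\<close> itself and an assumption.\<close>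
lemma peirce_step_normal:
  assumes "normal d" and "\<forall>A l e. d \<noteq> ImpI A l e"
  shows "normal (peirce_step X Y d)"
  using assms by (simp add: peirce_step_def)

text \<open>The label-1 discharges do not capture open assumptions of \<open>d\<close> if these carry other
  labels; then every open assumption of \<open>d\<close> appears twice.\<close>
lemma peirce_step_open_ass:
  assumes "\<forall>a \<in> set (open_ass d). snd a \<noteq> 1"
  shows "open_ass (peirce_step X Y d) = open_ass d @ open_ass d"
  using assms by (auto simp: peirce_step_def filter_id_conv)

text \<open>The two local assumptions are proper subformulas of \<open>chi X Y\<close>, so formulas at least
  as large as \<open>chi X Y\<close> occur as leaves exactly twice as often as in \<open>d\<close>.\<close>
lemma peirce_step_occurrences:
  assumes "size (chi X Y) \<le> size F"
  shows "occurrences F (peirce_step X Y d) = 2 * occurrences F d"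
proof -
  have "F \<noteq> X" and "F \<noteq> ((X \<rightarrow>\<^sub>f Y) \<rightarrow>\<^sub>f X)"
    using assms by (auto simp: chi_def)
  then show ?thesis by (simp add: occurrences_def peirce_step_def)
qed

text \<open>With \<open>xi 0 = C\<close>, the recursion for \<open>xi\<close> is uniform in the index.\<close>
lemma xi_Suc: "xi (Suc k) = chi (D (Suc k)) (xi k)"
  by (cases k) auto

fun descend :: "nat \<Rightarrow> deriv \<Rightarrow> deriv" where
  "descend 0 d = d"
| "descend (Suc k) d = descend k (peirce_step (D (Suc k)) (xi k) d)"

lemma descend_wf:
  assumes "wf d" and "concl d = xi k"
  shows "wf (descend k d) \<and> concl (descend k d) = C"
  using assms
proof (induction k arbitrary: d)
  case (Suc k)
  then show ?case by (simp add: peirce_step_wf xi_Suc)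
qed simp

lemma descend_normal:
  assumes "normal d" and "\<forall>A l e. d \<noteq> ImpI A l e"
  shows "normal (descend k d) \<and> (\<forall>A l e. descend k d \<noteq> ImpI A l e)"
  using assms
proof (induction k arbitrary: d)
  case (Suc k)
  then show ?case by (simp add: peirce_step_normal) (simp add: peirce_step_def)
qed simp

lemma concat_replicate_double:
  "concat (replicate m (xs @ xs)) = concat (replicate (2 * m) xs)"
  by (induction m) auto

lemma descend_open_ass:
  assumes "\<forall>a \<in> set (open_ass d). snd a \<noteq> 1"
  shows "open_ass (descend k d) = concat (replicate (2 ^ k) (open_ass d))"
  using assms
proof (induction k arbitrary: d)
  case (Suc k)
  then show ?case
    by (simp add: peirce_step_open_ass concat_replicate_double mult.commute)
qed simp

lemma descend_occurrences:
  assumes "size (xi k) \<le> size F"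
  shows "occurrences F (descend k d) = 2 ^ k * occurrences F d"
  using assms
proof (induction k arbitrary: d)
  case (Suc k)
  have "size (chi (D (Suc k)) (xi k)) \<le> size F"
    using Suc.prems by (simp add: xi_Suc)
  moreover from this have "size (xi k) \<le> size F"
    by (simp add: chi_def)
  ultimately show ?case
    using Suc.IH by (simp add: peirce_step_occurrences)
qed simp

text \<open>The construction does not need \<open>n > 0\<close>: for \<open>n = 0\<close> it is the proof of \<open>C \<rightarrow> C\<close>.\<close>

theorem mainTheorem2:
  fixes n :: nat
  assumes "n > 0"
  shows "\<exists>d l. is_proof (ImpI (xi n) l d) \<and> normal (ImpI (xi n) l d)
            \<and> concl (ImpI (xi n) l d) = phi n
            \<and> length (filter (\<lambda>(A, k). A = xi n) (leaves d)) = 2 ^ n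
            \<and> length (filter (\<lambda>x. x = (xi n, l)) (open_ass d)) = 2 ^ n"
proof -
  define d where "d = descend n (Ass (xi n) 0)"
  have wf: "wf d \<and> concl d = C"
    unfolding d_def by (rule descend_wf) simp_all
  have normal: "normal d"
    unfolding d_def using descend_normal by simp
  have open_ass: "open_ass d = replicate (2 ^ n) (xi n, 0)"
    unfolding d_def by (simp add: descend_open_ass)
  have "occurrences (xi n) d = 2 ^ n"
    using descend_occurrences[of n "xi n" "Ass (xi n) 0"]
    by (simp add: d_def occurrences_def)
  then have "is_proof (ImpI (xi n) 0 d) \<and> normal (ImpI (xi n) 0 d)
            \<and> concl (ImpI (xi n) 0 d) = phi n
            \<and> length (filter (\<lambda>(A, k). A = xi n) (leaves d)) = 2 ^ n
            \<and> length (filter (\<lambda>x. x = (xi n, 0)) (open_ass d)) = 2 ^ n"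
    using wf normal open_ass by (simp add: is_proof_def phi_def occurrences_def)
  then show ?thesis by blast
qed

end
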